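(* Let $G$ be a finite connected vertex-transitive $(q+1)$-regular graph and $x_0\in V(G)$. Then, as formal power series in $t$, \[ \zeta_a(G,t)=\zeta(G,t)\,\zeta(G,-t). \]
   Context: Let $D_G$ be the symmetric digraph of $G$ (arcs $(u,v),(v,u)$ for each edge $uv$; $o(u,v)=u$, $t(u,v)=v$, $(u,v)^{-1}=(v,u)$). Generalized Ihara zeta function: $\zeta(G,t)=\exp\big(\sum_{k\ge1}\frac{N^0_k}{k}t^k\big)$, where $N^0_k$ is the number of reduced cycles of length $k$ starting at $x_0$; a cycle of length $k$ is an arc sequence $(e_1,\dots,e_k)$ with $t(e_i)=o(e_{i+1})$, $t(e_k)=o(e_1)$, starting at $x_0=o(e_1)$; reduced means neither it nor $(e_1,\dots,e_k,e_1,\dots,e_k)$ contains consecutive arcs $e,e^{-1}$. Generalized alternating zeta function: $\zeta_a(G,t)=\exp\big(\sum_{k\ge1}\frac{N^{0,a}_k}{k}t^k\big)$, where $N^{0,a}_k$ is the number of reduced $x_0$-alternating cycles of length $k$ in $D_G$. Here an alternating walk of length $r$ is an arc sequence $[e_1,\dots,e_r]$ with vertices $v_0,\dots,v_r$ such that either $e_i=(v_{i-1},v_i)$ for odd $i$ and $e_i=(v_i,v_{i-1})$ for even $i$, or $e_i=(v_i,v_{i-1})$ for odd $i$ and $e_i=(v_{i-1},v_i)$ for even $i$; an $x_0$-alternating cycle is one of even length with $v_0=v_r=x_0$; it is reduced if $e_{i+1}\ne e_i$ for all $i\le r-1$ and $e_r\ne e_1$. By vertex-transitivity these functions do not depend on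 $x_0$. *)

theory Defs
  imports "HOL-Computational_Algebra.Formal_Power_Series"
begin

text \<open>A finite simple graph is given by a vertex set V and a symmetric irreflexive
  edge relation E on V. The arcs of the symmetric digraph D_G are the pairs (u,v) with E u v.\<close>

definition arcs :: "('a \<Rightarrow> 'a \<Rightarrow> bool) \<Rightarrow> ('a \<times> 'a) set" where
  "arcs E = {(u, v). E u v}"

definition rev_arc :: "'a \<times> 'a \<Rightarrow> 'a \<times> 'a" where
  "rev_arc e = (snd e, fst e)"

text \<open>Cycles (arc sequences, o = fst, t = snd) starting at x0.\<close>
definition is_cycle :: "('a \<Rightarrow> 'a \<Rightarrow> bool) \<Rightarrow> 'a \<Rightarrow> ('a \<times> 'a) list \<Rightarrow> bool" where
  "is_cycle E x0 es \<longleftrightarrow> es \<noteq> [] \<and> set es \<subseteq> arcs E \<and> fst (hd es) = x0 \<and>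
     (\<forall>i. Suc i < length es \<longrightarrow> snd (es ! i) = fst (es ! Suc i)) \<and>
     snd (last es) = fst (hd es)"

definition is_reduced_cycle :: "('a \<Rightarrow> 'a \<Rightarrow> bool) \<Rightarrow> 'a \<Rightarrow> ('a \<times> 'a) list \<Rightarrow> bool" where
  "is_reduced_cycle E x0 es \<longleftrightarrow> is_cycle E x0 es \<and>
     (\<forall>i. Suc i < length es \<longrightarrow> es ! Suc i \<noteq> rev_arc (es ! i)) \<and>
     (\<forall>i. Suc i < 2 * length es \<longrightarrow> (es @ es) ! Suc i \<noteq> rev_arc ((es @ es) ! i))"

definition N0 :: "('a \<Rightarrow> 'a \<Rightarrow> bool) \<Rightarrow> 'a \<Rightarrow> nat \<Rightarrow> nat" where
  "N0 E x0 k = card {es. length es = k \<and> is_reduced_cycle E x0 es}"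

text \<open>Alternating walks: arcs e_1..e_r (list indices 0..r-1) with vertices v_0..v_r.
  1-based index i+1 is odd iff the 0-based index i is even.\<close>
definition alt_walk :: "('a \<Rightarrow> 'a \<Rightarrow> bool) \<Rightarrow> ('a \<times> 'a) list \<Rightarrow> 'a list \<Rightarrow> bool" where
  "alt_walk E es vs \<longleftrightarrow> set es \<subseteq> arcs E \<and> length vs = Suc (length es) \<and>
     ((\<forall>i<length es. es ! i = (if even i then (vs ! i, vs ! Suc i) else (vs ! Suc i, vs ! i))) \<or>
      (\<forall>i<length es. es ! i = (if even i then (vs ! Suc i, vs ! i) else (vs ! i, vs ! Suc i))))"

definition is_alt_cycle :: "('a \<Rightarrow> 'a \<Rightarrow> bool) \<Rightarrow> 'a \<Rightarrow> ('a \<times> 'a) list \<Rightarrow> bool" where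
  "is_alt_cycle E x0 es \<longleftrightarrow> even (length es) \<and>
     (\<exists>vs. alt_walk E es vs \<and> vs ! 0 = x0 \<and> vs ! length es = x0)"

definition is_reduced_alt_cycle :: "('a \<Rightarrow> 'a \<Rightarrow> bool) \<Rightarrow> 'a \<Rightarrow> ('a \<times> 'a) list \<Rightarrow> bool" where
  "is_reduced_alt_cycle E x0 es \<longleftrightarrow> is_alt_cycle E x0 es \<and>
     (\<forall>i. Suc i < length es \<longrightarrow> es ! Suc i \<noteq> es ! i) \<and>
     (es \<noteq> [] \<longrightarrow> last es \<noteq> hd es)"

definition N0a :: "('a \<Rightarrow> 'a \<Rightarrow> bool) \<Rightarrow> 'a \<Rightarrow> nat \<Rightarrow> nat" where
  "N0a E x0 k = card {es. length es = k \<and> is_reduced_alt_cycle E x0 es}"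

definition zeta_of_counts :: "(nat \<Rightarrow> nat) \<Rightarrow> real fps" where
  "zeta_of_counts N =
     fps_compose (fps_exp 1) (Abs_fps (\<lambda>k. if k = 0 then 0 else of_nat (N k) / of_nat k))"

definition ihara_zeta :: "('a \<Rightarrow> 'a \<Rightarrow> bool) \<Rightarrow> 'a \<Rightarrow> real fps" where
  "ihara_zeta E x0 = zeta_of_counts (N0 E x0)"

definition alt_zeta :: "('a \<Rightarrow> 'a \<Rightarrow> bool) \<Rightarrow> 'a \<Rightarrow> real fps" where
  "alt_zeta E x0 = zeta_of_counts (N0a E x0)"

end

theory Submission
  imports Defs
begin

text \<open>Reversing every other arc of a reduced alternating closed walk at \<open>x\<^sub>0\<close> of
  length \<open>k\<close> yields a reduced cycle at \<open>x\<^sub>0\<close>: reversing the odd-position arcs if the walk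
  leaves \<open>x\<^sub>0\<close> along its first arc, the even-position ones otherwise. Since \<open>k\<close> must be
  even, the condition \<open>e\<^sub>r \<noteq> e\<^sub>1\<close> becomes the cyclic no-backtracking condition, and
  conversely every reduced cycle of even length arises from exactly two reduced alternating
  cycles, which are distinct because the graph has no loops. Hence
  \<open>N\<^sup>a\<^sub>k = 2 N\<^sub>k\<close> for even \<open>k\<close> and \<open>N\<^sup>a\<^sub>k = 0\<close> for odd \<open>k\<close>, i.e.
  \<open>log \<zeta>\<^sub>a(t) = L(t) + L(-t)\<close> with \<open>L = log \<zeta>\<close>, and exponentiating gives the claim.\<close>

unbundle fps_syntax

definition reverse_alternate :: "bool \<Rightarrow> ('a \<times> 'a) list \<Rightarrow> ('a \<times> 'a) list" where
  "reverse_alternate b es =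
     map (\<lambda>i. if even i = b then es ! i else rev_arc (es ! i)) [0..<length es]"

lemma length_reverse_alternate [simp]: "length (reverse_alternate b es) = length es"
  by (simp add: reverse_alternate_def)

lemma reverse_alternate_eq_Nil_iff [simp]: "reverse_alternate b es = [] \<longleftrightarrow> es = []"
  by (simp add: reverse_alternate_def)

lemma nth_reverse_alternate [simp]:
  "i < length es \<Longrightarrow>
     reverse_alternate b es ! i = (if even i = b then es ! i else rev_arc (es ! i))"
  by (simp add: reverse_alternate_def)

lemma rev_arc_rev_arc [simp]: "rev_arc (rev_arc e) = e"
  by (simp add: rev_arc_def)

lemma rev_arc_eq_iff [simp]: "rev_arc a = rev_arc b \<longleftrightarrow> a = b"
  by (metis rev_arc_rev_arc)

lemma reverse_alternate_reverse_alternate [simp]: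
  "reverse_alternate b (reverse_alternate b es) = es"
  by (rule nth_equalityI) auto

lemma rev_arc_in_arcs_iff:
  assumes "\<And>u v. E u v \<Longrightarrow> E v u"
  shows "rev_arc e \<in> arcs E \<longleftrightarrow> e \<in> arcs E"
  using assms by (cases e) (auto simp: rev_arc_def arcs_def)

lemma set_reverse_alternate_subset_arcs_iff:
  assumes "\<And>u v. E u v \<Longrightarrow> E v u"
  shows "set (reverse_alternate b es) \<subseteq> arcs E \<longleftrightarrow> set es \<subseteq> arcs E"
proof -
  have "list_all (\<lambda>e. e \<in> arcs E) (reverse_alternate b es) \<longleftrightarrow> list_all (\<lambda>e. e \<in> arcs E) es"
    by (auto simp: list_all_length rev_arc_in_arcs_iff[OF assms])
  then show ?thesis
    by (simp add: list_all_iff subset_code(1))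
qed

definition closed_walk_at :: "'a \<Rightarrow> ('a \<times> 'a) list \<Rightarrow> bool" where
  "closed_walk_at x0 c \<longleftrightarrow> fst (hd c) = x0 \<and>
     (\<forall>i. Suc i < length c \<longrightarrow> snd (c ! i) = fst (c ! Suc i)) \<and> snd (last c) = fst (hd c)"

lemma closed_walk_at_iff_vertices:
  assumes "c \<noteq> []"
  shows "closed_walk_at x0 c \<longleftrightarrow>
    (\<exists>vs. length vs = Suc (length c) \<and> (\<forall>i<length c. c ! i = (vs ! i, vs ! Suc i)) \<and>
          vs ! 0 = x0 \<and> vs ! length c = x0)"
proof
  assume walk: "closed_walk_at x0 c"
  define vs where "vs = map fst c @ [x0]"
  have "c ! i = (vs ! i, vs ! Suc i)" if "i < length c" for i
  proof (cases "Suc i < length c")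
    case True
    then show ?thesis using walk by (simp add: closed_walk_at_def vs_def nth_append prod_eq_iff)
  next
    case False
    with that have "i = length c - 1" by simp
    with walk assms show ?thesis
      by (simp add: closed_walk_at_def vs_def nth_append prod_eq_iff hd_conv_nth last_conv_nth)
  qed
  moreover have "vs ! 0 = x0"
    using walk assms by (simp add: closed_walk_at_def vs_def nth_append hd_conv_nth)
  ultimately show "\<exists>vs. length vs = Suc (length c) \<and> (\<forall>i<length c. c ! i = (vs ! i, vs ! Suc i)) \<and>
      vs ! 0 = x0 \<and> vs ! length c = x0"
    by (intro exI[of _ vs]) (simp add: vs_def nth_append)
next
  assume "\<exists>vs. length vs = Suc (length c) \<and> (\<forall>i<length c. c ! i = (vs ! i, vs ! Suc i)) \<and>
      vs ! 0 = x0 \<and> vs ! length c = x0"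
  with assms show "closed_walk_at x0 c"
    by (auto simp: closed_walk_at_def hd_conv_nth last_conv_nth)
qed

lemma alt_walk_iff_reverse_alternate:
  "alt_walk E es vs \<longleftrightarrow> set es \<subseteq> arcs E \<and> length vs = Suc (length es) \<and>
     (\<exists>b. \<forall>i<length es. reverse_alternate b es ! i = (vs ! i, vs ! Suc i))"
proof -
  have step: "es ! i = (if even i = b then (vs ! i, vs ! Suc i) else (vs ! Suc i, vs ! i)) \<longleftrightarrow>
      reverse_alternate b es ! i = (vs ! i, vs ! Suc i)" if "i < length es" for b i
    using that by (cases "es ! i") (auto simp: rev_arc_def)
  then have mode: "(\<forall>i<length es.
        es ! i = (if even i = b then (vs ! i, vs ! Suc i) else (vs ! Suc i, vs ! i))) \<longleftrightarrow>
      (\<forall>i<length es. reverse_alternate b es ! i = (vs ! i, vs ! Suc i))" for b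
    by blast
  show ?thesis
    unfolding alt_walk_def ex_bool_eq mode[of True, symmetric] mode[of False, symmetric]
    by (simp add: if_not_P cong: if_cong) metis
qed

definition no_backtrack :: "('a \<times> 'a) list \<Rightarrow> bool" where
  "no_backtrack es \<longleftrightarrow> (\<forall>i. Suc i < length es \<longrightarrow> es ! Suc i \<noteq> rev_arc (es ! i))"

lemma no_backtrack_append_self_iff:
  assumes "es \<noteq> []"
  shows "no_backtrack (es @ es) \<longleftrightarrow> no_backtrack es \<and> hd es \<noteq> rev_arc (last es)"
proof -
  have "no_backtrack (es @ es) \<longleftrightarrow>
      (\<forall>i. Suc i < length es \<longrightarrow> es ! Suc i \<noteq> rev_arc (es ! i)) \<and>
      es ! 0 \<noteq> rev_arc (es ! (length es - 1))"
    unfolding no_backtrack_def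
  proof (intro iffI conjI allI impI)
    fix i
    assume no_bt: "\<forall>i. Suc i < length (es @ es) \<longrightarrow> (es @ es) ! Suc i \<noteq> rev_arc ((es @ es) ! i)"
    show "Suc i < length es \<Longrightarrow> es ! Suc i \<noteq> rev_arc (es ! i)"
      using no_bt[rule_format, of i] by (simp add: nth_append)
    show "es ! 0 \<noteq> rev_arc (es ! (length es - 1))"
      using no_bt[rule_format, of "length es - 1"] assms by (simp add: nth_append)
  next
    fix i
    assume no_bt: "(\<forall>i. Suc i < length es \<longrightarrow> es ! Suc i \<noteq> rev_arc (es ! i)) \<and>
      es ! 0 \<noteq> rev_arc (es ! (length es - 1))" and i: "Suc i < length (es @ es)"
    consider "Suc i < length es" | "i = length es - 1 \<and> Suc i = length es"
      | "length es \<le> i \<and> Suc i - length es = Suc (i - length es)"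
      by linarith
    then show "(es @ es) ! Suc i \<noteq> rev_arc ((es @ es) ! i)"
      by cases (use no_bt i in \<open>auto simp: nth_append\<close>)
  qed
  with assms show ?thesis
    by (simp add: no_backtrack_def hd_conv_nth last_conv_nth)
qed

lemma is_reduced_cycle_iff:
  "is_reduced_cycle E x0 es \<longleftrightarrow> es \<noteq> [] \<and> set es \<subseteq> arcs E \<and> closed_walk_at x0 es \<and>
     no_backtrack es \<and> hd es \<noteq> rev_arc (last es)"
  using no_backtrack_append_self_iff[of es]
  by (auto simp: is_reduced_cycle_def is_cycle_def closed_walk_at_def no_backtrack_def)

lemma no_backtrack_reverse_alternate_iff:
  "no_backtrack (reverse_alternate b es) \<longleftrightarrow> (\<forall>i. Suc i < length es \<longrightarrow> es ! Suc i \<noteq> es ! i)"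
  by (auto simp: no_backtrack_def)

lemma reverse_alternate_hd_last:
  assumes "es \<noteq> []" "even (length es)"
  shows "hd (reverse_alternate b es) \<noteq> rev_arc (last (reverse_alternate b es)) \<longleftrightarrow> last es \<noteq> hd es"
proof -
  have "odd (length es - 1)"
    using assms by (cases "length es") auto
  with assms show ?thesis
    by (auto simp: hd_conv_nth last_conv_nth)
qed

lemma is_alt_cycle_iff_reverse_alternate:
  assumes "es \<noteq> []"
  shows "is_alt_cycle E x0 es \<longleftrightarrow>
    even (length es) \<and> set es \<subseteq> arcs E \<and> (\<exists>b. closed_walk_at x0 (reverse_alternate b es))"
proof -
  have "closed_walk_at x0 (reverse_alternate b es) \<longleftrightarrow>
    (\<exists>vs. length vs = Suc (length es) \<and>
      (\<forall>i<length es. reverse_alternate b es ! i = (vs ! i, vs ! Suc i)) \<and>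
      vs ! 0 = x0 \<and> vs ! length es = x0)" for b
    using closed_walk_at_iff_vertices[of "reverse_alternate b es" x0] assms
    by (simp only: reverse_alternate_eq_Nil_iff length_reverse_alternate simp_thms)
  then show ?thesis
    unfolding is_alt_cycle_def alt_walk_iff_reverse_alternate by blast
qed

lemma is_reduced_alt_cycle_iff_reverse_alternate:
  assumes "\<And>u v. E u v \<Longrightarrow> E v u" and "es \<noteq> []"
  shows "is_reduced_alt_cycle E x0 es \<longleftrightarrow>
    even (length es) \<and> (\<exists>b. is_reduced_cycle E x0 (reverse_alternate b es))"
  using assms(2) reverse_alternate_hd_last[OF assms(2)]
  by (auto simp: is_reduced_alt_cycle_def is_alt_cycle_iff_reverse_alternate is_reduced_cycle_iff
      set_reverse_alternate_subset_arcs_iff[OF assms(1)] no_backtrack_reverse_alternate_iff)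

lemma reverse_alternate_True_neq_False:
  assumes "\<And>u. \<not> E u u" and "is_reduced_cycle E x0 c" and "is_reduced_cycle E x0 c'"
  shows "reverse_alternate True c \<noteq> reverse_alternate False c'"
proof
  assume eq: "reverse_alternate True c = reverse_alternate False c'"
  have "c \<noteq> []" "c' \<noteq> []" "fst (c ! 0) = x0" "fst (c' ! 0) = x0" "c ! 0 \<in> arcs E"
    using assms(2,3) by (auto simp: is_reduced_cycle_def is_cycle_def hd_conv_nth)
  moreover from eq have "reverse_alternate True c ! 0 = reverse_alternate False c' ! 0"
    by simp
  ultimately have "c ! 0 = rev_arc (c' ! 0)"
    by (metis length_reverse_alternate length_greater_0_conv nth_reverse_alternate even_zero)
  with \<open>fst (c ! 0) = x0\<close> \<open>fst (c' ! 0) = x0\<close> \<open>c ! 0 \<in> arcs E\<close> have "E x0 x0"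
    by (cases "c ! 0"; cases "c' ! 0") (auto simp: rev_arc_def arcs_def)
  with assms(1) show False
    by blast
qed

lemma reduced_alt_cycles_eq_reverse_alternate_image:
  assumes "\<And>u v. E u v \<Longrightarrow> E v u" and "k > 0" and "even k"
  shows "{es. length es = k \<and> is_reduced_alt_cycle E x0 es} =
    (\<Union>b. reverse_alternate b ` {c. length c = k \<and> is_reduced_cycle E x0 c})"
proof -
  have mem_image: "es \<in> reverse_alternate b ` {c. length c = k \<and> is_reduced_cycle E x0 c} \<longleftrightarrow>
      length es = k \<and> is_reduced_cycle E x0 (reverse_alternate b es)" for b es
    by (auto intro!: image_eqI[where x = "reverse_alternate b es"])
  have alt_iff: "is_reduced_alt_cycle E x0 es \<longleftrightarrow>
      (\<exists>b. is_reduced_cycle E x0 (reverse_alternate b es))" if "length es = k" for es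
  proof -
    from that assms(2) have "es \<noteq> []"
      by auto
    with that assms(3) show ?thesis
      by (simp add: is_reduced_alt_cycle_iff_reverse_alternate[where E = E, OF assms(1)])
  qed
  show ?thesis
  proof (rule set_eqI)
    fix es
    show "es \<in> {es. length es = k \<and> is_reduced_alt_cycle E x0 es} \<longleftrightarrow>
        es \<in> (\<Union>b. reverse_alternate b ` {c. length c = k \<and> is_reduced_cycle E x0 c})"
      unfolding UN_iff mem_image mem_Collect_eq using alt_iff by blast
  qed
qed

lemma N0a_eq_double_N0:
  assumes "finite V" and "\<And>u v. E u v \<Longrightarrow> u \<in> V \<and> v \<in> V"
    and "\<And>u v. E u v \<Longrightarrow> E v u" and "\<And>u. \<not> E u u" and "k > 0"
  shows "N0a E x0 k = (if even k then 2 * N0 E x0 k else 0)"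
proof (cases "even k")
  case False
  then have no_alt_cycles: "{es. length es = k \<and> is_reduced_alt_cycle E x0 es} = {}"
    using assms(3,5) by (auto simp: is_reduced_alt_cycle_iff_reverse_alternate)
  show ?thesis
    unfolding N0a_def no_alt_cycles using False by simp
next
  case True
  define R where "R = {c. length c = k \<and> is_reduced_cycle E x0 c}"
  have "finite (arcs E)"
    using assms(1,2) by (auto intro: finite_subset[of _ "V \<times> V"] simp: arcs_def)
  then have "finite R"
    by (auto simp: R_def is_reduced_cycle_def is_cycle_def
        intro: finite_subset[OF _ finite_lists_length_eq[of "arcs E" k]])
  moreover have "inj_on (reverse_alternate b) R" for b
    by (rule inj_on_inverseI[where g = "reverse_alternate b"]) simp
  moreover have "reverse_alternate False ` R \<inter> reverse_alternate True ` R = {}"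
    using reverse_alternate_True_neq_False[where E = E, OF assms(4)] by (fastforce simp: R_def)
  ultimately have "card (\<Union>b. reverse_alternate b ` R) = 2 * card R"
    by (simp add: UNIV_bool card_Un_disjoint card_image)
  with True show ?thesis
    using reduced_alt_cycles_eq_reverse_alternate_image[of E k x0, OF assms(3,5) True]
    by (simp add: N0a_def N0_def R_def)
qed

lemma fps_linear_ODE_unique:
  fixes F G C :: "'a::field_char_0 fps"
  assumes "fps_deriv F = F * C" and "fps_deriv G = G * C" and "F $ 0 = G $ 0"
  shows "F = G"
proof -
  have "F $ n = G $ n" for n
  proof (induction n rule: less_induct)
    case (less n)
    show ?case
    proof (cases n)
      case 0
      with assms(3) show ?thesis by simp
    next
      case (Suc m)
      have "of_nat (Suc m) * F $ Suc m = (F * C) $ m"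
        using assms(1) fps_deriv_nth[of F m] by simp
      also have "\<dots> = (G * C) $ m"
        unfolding fps_mult_nth using less Suc by (intro sum.cong) auto
      also have "\<dots> = of_nat (Suc m) * G $ Suc m"
        using assms(2) fps_deriv_nth[of G m] by simp
      finally show ?thesis
        using Suc by (simp del: of_nat_Suc)
    qed
  qed
  then show ?thesis
    by (simp add: fps_eq_iff)
qed

lemma fps_exp_compose_add:
  fixes A B :: "'a::field_char_0 fps"
  assumes "A $ 0 = 0" and "B $ 0 = 0"
  shows "fps_exp 1 oo (A + B) = (fps_exp 1 oo A) * (fps_exp 1 oo B)"
  by (rule fps_linear_ODE_unique[where C = "fps_deriv A + fps_deriv B"])
    (use assms in \<open>simp_all add: fps_compose_deriv algebra_simps\<close>)

lemma zeta_of_counts_even_doubling: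
  assumes "\<And>k. k > 0 \<Longrightarrow> Na k = (if even k then 2 * N k else 0)"
  shows "zeta_of_counts Na = zeta_of_counts N * (zeta_of_counts N oo - fps_X)"
proof -
  define L where "L = Abs_fps (\<lambda>k. if k = 0 then 0 else of_nat (N k) / of_nat k :: real)"
  have L0: "L $ 0 = 0"
    by (simp add: L_def)
  have "Abs_fps (\<lambda>k. if k = 0 then 0 else of_nat (Na k) / of_nat k) = L + (L oo - fps_X)"
    by (auto simp: fps_eq_iff L_def fps_compose_uminus' assms field_simps)
  moreover have "zeta_of_counts N oo - fps_X = fps_exp 1 oo (L oo - fps_X)"
    unfolding zeta_of_counts_def L_def[symmetric]
    by (rule fps_compose_assoc[symmetric]) (simp_all add: L0)
  ultimately show ?thesis
    using L0 by (simp add: zeta_of_counts_def L_def[symmetric] fps_exp_compose_add)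
qed

theorem proposition3:
  fixes V :: "'a set" and E :: "'a \<Rightarrow> 'a \<Rightarrow> bool" and q :: nat and x0 :: 'a
  assumes fin: "finite V"
    and edges_in: "\<And>u v. E u v \<Longrightarrow> u \<in> V \<and> v \<in> V"
    and sym: "\<And>u v. E u v \<Longrightarrow> E v u"
    and irrefl: "\<And>u. \<not> E u u"
    and connected: "\<forall>u\<in>V. \<forall>v\<in>V. E\<^sup>*\<^sup>* u v"
    and vtrans: "\<forall>u\<in>V. \<forall>v\<in>V. \<exists>f. bij_betw f V V \<and>
                   (\<forall>a\<in>V. \<forall>b\<in>V. E a b \<longleftrightarrow> E (f a) (f b)) \<and> f u = v"
    and regular: "\<forall>v\<in>V. card {u\<in>V. E v u} = q + 1"
    and x0: "x0 \<in> V"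
  shows "alt_zeta E x0 = ihara_zeta E x0 * fps_compose (ihara_zeta E x0) (- fps_X)"
  unfolding alt_zeta_def ihara_zeta_def
  by (rule zeta_of_counts_even_doubling) (rule N0a_eq_double_N0[OF fin edges_in sym irrefl])

end
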